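(* Let $n,N\ge1$ and positive integers $r_1,\dots,r_N,r$ with $r_i\le r\le\lfloor(n-1)/2\rfloor$. Consider either (a) $d=n$, $p=r_i+1$, $q=n-r_i$ for some $i$, and $\mathcal{A}(y)=\mathcal{H}_{r_i+1}(y)$ for $y\in\mathbb{R}^n$; or (b) $d=Nn$, $p=r+1$, $q=N(n-r)$, and $\mathcal{A}(y)=[\mathcal{H}_{r+1}(y_1)\cdots\mathcal{H}_{r+1}(y_N)]$ for $y=(y_1^\top,\dots,y_N^\top)^\top\in\mathbb{R}^{Nn}$. Then for any $U\in\mathbb{R}^{1\times q}$ and any $R\in\mathbb{R}^{1\times p}\setminus\{0\}$, if $\mathcal{A}^*(R^\top U)=0$ then $U=0$.
   Context: For $x\in\mathbb{R}^n$ and $1\le l\le n$, $\mathcal{H}_l(x)\in\mathbb{R}^{l\times(n-l+1)}$ is the Hankel matrix with $(i,j)$ entry $x(i+j-1)$. $\mathcal{A}^*:\mathbb{R}^{p\times q}\to\mathbb{R}^d$ is the adjoint of the linear map $\mathcal{A}:\mathbb{R}^d\to\mathbb{R}^{p\times q}$ with respect to the standard (Frobenius) inner products. *)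

theory Defs
  imports Complex_Main
begin

text \<open>Conventions: vectors in R^d are functions nat => real, only the entries with
index < d being relevant; p x q matrices are functions nat => nat => real, only entries
(i,j) with i < p, j < q being relevant. Indices are 0-based, so the 1-based paper entry
x(i+j-1) becomes x (i+j).\<close>

definition hankel :: "nat \<Rightarrow> (nat \<Rightarrow> real) \<Rightarrow> nat \<Rightarrow> nat \<Rightarrow> real" where
  "hankel l x = (\<lambda>i j. x (i + j))"
  \<comment> \<open>H_l(x) for x in R^n is the l x (n-l+1) matrix with entries x(i+j) (0-based).\<close>

definition frob :: "nat \<Rightarrow> nat \<Rightarrow> (nat \<Rightarrow> nat \<Rightarrow> real) \<Rightarrow> (nat \<Rightarrow> nat \<Rightarrow> real) \<Rightarrow> real" where
  "frob p q M M' = (\<Sum>i<p. \<Sum>j<q. M i j * M' i j)"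

definition std_basis :: "nat \<Rightarrow> nat \<Rightarrow> real" where
  "std_basis k = (\<lambda>t. if t = k then 1 else 0)"

definition adjoint :: "nat \<Rightarrow> nat \<Rightarrow> ((nat \<Rightarrow> real) \<Rightarrow> (nat \<Rightarrow> nat \<Rightarrow> real))
    \<Rightarrow> (nat \<Rightarrow> nat \<Rightarrow> real) \<Rightarrow> nat \<Rightarrow> real" where
  "adjoint p q A M = (\<lambda>k. frob p q (A (std_basis k)) M)"

text \<open>Case (b): y in R^(N n) is split into blocks y_b(t) = y(b n + t), b < N, and
A(y) = [H_(r+1)(y_1) ... H_(r+1)(y_N)] of size (r+1) x N(n-r).\<close>
definition block_hankel :: "nat \<Rightarrow> nat \<Rightarrow> (nat \<Rightarrow> real) \<Rightarrow> nat \<Rightarrow> nat \<Rightarrow> real" where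
  "block_hankel n r y = (\<lambda>i j. hankel (r + 1) (\<lambda>t. y ((j div (n - r)) * n + t)) i (j mod (n - r)))"

definition outer :: "(nat \<Rightarrow> real) \<Rightarrow> (nat \<Rightarrow> real) \<Rightarrow> nat \<Rightarrow> nat \<Rightarrow> real" where
  "outer R U = (\<lambda>i j. R i * U j)"

end

theory Submission
  imports Defs "HOL-Computational_Algebra.Polynomial"
begin

text \<open>The k-th coordinate of the adjoint of the Hankel map at the outer product of R and U
is the k-th coefficient of the product of the polynomials with coefficient vectors R and U,
and the coordinates k < p + q - 1 cover all coefficients of that product. So the product
vanishes, and as R is a nonzero polynomial and real polynomials form an integral domain,
U = 0. In the block case the coordinates of the adjoint belonging to one block of y only see
the corresponding block of U, which reduces it to the single Hankel case.\<close>

definition vec_poly :: "nat \<Rightarrow> (nat \<Rightarrow> 'a) \<Rightarrow> 'a::comm_semiring_1 poly" where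
  "vec_poly d x = (\<Sum>i<d. monom (x i) i)"

lemma coeff_vec_poly: "coeff (vec_poly d x) i = (if i < d then x i else 0)"
  by (simp add: vec_poly_def coeff_sum coeff_monom)

lemma vec_poly_eq_0_iff: "vec_poly d x = 0 \<longleftrightarrow> (\<forall>i<d. x i = 0)"
  by (auto simp: poly_eq_iff coeff_vec_poly)

lemma degree_vec_poly_le: "degree (vec_poly d x) \<le> d - 1"
  by (rule degree_le) (auto simp: coeff_vec_poly)

lemma vec_poly_mult:
  "vec_poly p x * vec_poly q y = (\<Sum>i<p. \<Sum>j<q. monom (x i * y j) (i + j))"
  by (simp add: vec_poly_def sum_product mult_monom)

lemma adjoint_hankel_outer:
  "adjoint p q (hankel p) (outer R U) k = coeff (vec_poly p R * vec_poly q U) k"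
  unfolding vec_poly_mult adjoint_def frob_def hankel_def std_basis_def outer_def
  by (auto simp: coeff_sum coeff_monom intro!: sum.cong)

lemma adjoint_hankel_outer_eq_0_imp:
  fixes R U :: "nat \<Rightarrow> real"
  assumes R: "\<exists>a<p. R a \<noteq> 0"
    and adj: "\<forall>k<p + q - 1. adjoint p q (hankel p) (outer R U) k = 0"
  shows "\<forall>j<q. U j = 0"
proof -
  have "coeff (vec_poly p R * vec_poly q U) k = 0" for k
  proof (cases "k < p + q - 1")
    case True
    then show ?thesis using adj by (simp add: adjoint_hankel_outer)
  next
    case False
    have "degree (vec_poly p R * vec_poly q U) \<le> (p - 1) + (q - 1)"
      using degree_mult_le add_mono[OF degree_vec_poly_le degree_vec_poly_le] order_trans
      by blast
    then show ?thesis
      using False R by (cases q) (auto simp: vec_poly_def intro: coeff_eq_0)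
  qed
  then have "vec_poly p R * vec_poly q U = 0"
    by (simp add: poly_eq_iff)
  moreover have "vec_poly p R \<noteq> 0"
    using R by (simp add: vec_poly_eq_0_iff)
  ultimately have "vec_poly q U = 0"
    by simp
  then show ?thesis
    by (simp add: vec_poly_eq_0_iff)
qed

lemma sum_lessThan_mult_blocks:
  fixes f :: "nat \<Rightarrow> 'a::comm_monoid_add"
  shows "(\<Sum>j<N * m. f j) = (\<Sum>b<N. \<Sum>c<m. f (b * m + c))"
proof -
  have "sum f {b * m..<b * m + m} = (\<Sum>c<m. f (b * m + c))" for b
    using sum.shift_bounds_nat_ivl[of f 0 "b * m" m]
    by (simp add: atLeast0LessThan add.commute)
  then show ?thesis
    using sum.nat_group[of f m N] by simp
qed

lemma adjoint_block_hankel: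
  assumes "b < N" and "t < n" and "r < n"
  shows "adjoint (r + 1) (N * (n - r)) (block_hankel n r) M (b * n + t)
       = adjoint (r + 1) (n - r) (hankel (r + 1)) (\<lambda>i c. M i (b * (n - r) + c)) t"
proof -
  define m where "m = n - r"
  have entry: "block_hankel n r (std_basis (b * n + t)) i (b' * m + c)
      = (if b' = b then hankel (r + 1) (std_basis t) i c else 0)"
    if "i < r + 1" and "c < m" for i b' c
  proof -
    have "i + c < n"
      using that by (simp add: m_def)
    then have "b' * n + (i + c) = b * n + t \<longleftrightarrow> b' = b \<and> i + c = t"
      using \<open>t < n\<close> by (metis add_right_cancel div_mult_self3 mod_mult_self3 mod_less not_less0 div_less)
    moreover have "(b' * m + c) div m = b'" and "(b' * m + c) mod m = c"
      using that by auto
    ultimately show ?thesis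
      by (simp add: block_hankel_def hankel_def std_basis_def m_def add.assoc)
  qed
  have "(\<Sum>j<N * m. block_hankel n r (std_basis (b * n + t)) i j * M i j)
      = (\<Sum>c<m. hankel (r + 1) (std_basis t) i c * M i (b * m + c))"
    if "i < r + 1" for i
  proof -
    have "(\<Sum>j<N * m. block_hankel n r (std_basis (b * n + t)) i j * M i j)
        = (\<Sum>b'<N. if b' = b then \<Sum>c<m. hankel (r + 1) (std_basis t) i c * M i (b * m + c)
                     else 0)"
      unfolding sum_lessThan_mult_blocks using that by (intro sum.cong refl) (auto simp: entry)
    also have "\<dots> = (\<Sum>c<m. hankel (r + 1) (std_basis t) i c * M i (b * m + c))"
      using \<open>b < N\<close> by simp
    finally show ?thesis .
  qed
  then show ?thesis
    by (simp add: adjoint_def frob_def m_def)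
qed

lemma adjoint_block_hankel_outer_eq_0_imp:
  fixes R U :: "nat \<Rightarrow> real"
  assumes R: "\<exists>a<r + 1. R a \<noteq> 0" and "r < n"
    and adj: "\<forall>k<N * n. adjoint (r + 1) (N * (n - r)) (block_hankel n r) (outer R U) k = 0"
  shows "\<forall>j<N * (n - r). U j = 0"
proof (intro allI impI)
  fix j assume j: "j < N * (n - r)"
  define m where "m = n - r"
  define b where "b = j div m"
  have "b < N"
    using j by (simp add: b_def m_def less_mult_imp_div_less)
  have "adjoint (r + 1) m (hankel (r + 1)) (outer R (\<lambda>c. U (b * m + c))) t = 0"
    if "t < r + 1 + m - 1" for t
  proof -
    have "t < n"
      using that \<open>r < n\<close> by (simp add: m_def)
    have "b * n + t < Suc b * n"
      using \<open>t < n\<close> by simp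
    also have "\<dots> \<le> N * n"
      using \<open>b < N\<close> by (intro mult_right_mono) auto
    finally show ?thesis
      using adj adjoint_block_hankel[OF \<open>b < N\<close> \<open>t < n\<close> \<open>r < n\<close>, of "outer R U"]
      by (simp add: outer_def m_def)
  qed
  then have "\<forall>c<m. U (b * m + c) = 0"
    using adjoint_hankel_outer_eq_0_imp R by blast
  moreover have "j mod m < m"
    using \<open>r < n\<close> by (simp add: m_def)
  ultimately show "U j = 0"
    by (metis b_def mult.commute div_mult_mod_eq)
qed

theorem lemma4p1:
  fixes n N r :: nat and rs :: "nat \<Rightarrow> nat"
  assumes "n \<ge> 1" and "N \<ge> 1" and "r \<ge> 1"
    and "\<forall>i\<in>{1..N}. 1 \<le> rs i \<and> rs i \<le> r"
    and "r \<le> (n - 1) div 2"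
  shows "(\<forall>i\<in>{1..N}. \<forall>R U :: nat \<Rightarrow> real.
            (\<exists>a < rs i + 1. R a \<noteq> 0) \<and>
            (\<forall>k < n. adjoint (rs i + 1) (n - rs i) (hankel (rs i + 1)) (outer R U) k = 0)
            \<longrightarrow> (\<forall>j < n - rs i. U j = 0))
       \<and> (\<forall>R U :: nat \<Rightarrow> real.
            (\<exists>a < r + 1. R a \<noteq> 0) \<and>
            (\<forall>k < N * n. adjoint (r + 1) (N * (n - r)) (block_hankel n r) (outer R U) k = 0)
            \<longrightarrow> (\<forall>j < N * (n - r). U j = 0))"
proof -
  have "r < n"
    using assms(1,5) by linarith
  show ?thesis
  proof (intro conjI ballI allI impI)
    fix i R U j
    assume "i \<in> {1..N}"
      and "(\<exists>a < rs i + 1. R a \<noteq> 0)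
        \<and> (\<forall>k < n. adjoint (rs i + 1) (n - rs i) (hankel (rs i + 1)) (outer R U) k = 0)"
      and "j < n - rs i"
    moreover have "rs i + 1 + (n - rs i) - 1 = n"
      using assms(4) \<open>i \<in> {1..N}\<close> \<open>r < n\<close> by force
    ultimately show "U j = 0"
      using adjoint_hankel_outer_eq_0_imp[of "rs i + 1" R "n - rs i" U] by auto
  next
    fix R U j
    assume "(\<exists>a < r + 1. R a \<noteq> 0)
        \<and> (\<forall>k < N * n. adjoint (r + 1) (N * (n - r)) (block_hankel n r) (outer R U) k = 0)"
      and "j < N * (n - r)"
    then show "U j = 0"
      using adjoint_block_hankel_outer_eq_0_imp \<open>r < n\<close> by blast
  qed
qed

end
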